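(* Consider the one-dimensional hierarchical heavy hitter algorithm described in the context, with threshold $\phi$ and accuracy parameter $\epsilon$ such that $1/\epsilon$ is a positive integer and $\epsilon<\phi/2$, run on a nonempty stream ($N>0$). Let $P$ be the set of prefixes it outputs, and for each prefix $p$ let $F'_p=f_{\max}(p)-s_p$ (with $s_p$ the final value computed by the output procedure) be the estimated conditioned count and $F_p$ the conditioned count of $p$ with respect to $P$. Then $|P|\le\frac{1}{\phi-2\epsilon}$, and for every $p\in P$, $F'_p-F_p\le\frac{1}{\phi-2\epsilon}\,\epsilon N$.
   Context: Hierarchy: a rooted tree in which every leaf has depth $h$; nodes are prefixes, leaves are fully specified elements; $e\preceq p$ means $p$ is an ancestor of or equal to $e$, $e\prec p$ means additionally $e\neq p$; non-root prefixes have a parent $\mathrm{par}(p)$. Stream: updates $(e,c)$, $e$ fully specified, $c$ a positive integer; $f(e)$ is the total increment of $e$, $N=\sum_e f(e)$, and $f(p)=\sum_{e\preceq p}f(e)$ for a prefix $p$. For a set $P$ of prefixes and a prefix $p$, with $P_p=\{q\in P:q\prec p\}$, the conditioned count is $F_p=\sum f(e)$ over fully specified $e\preceq p$ with $e\not\preceq q$ for all $q\in P_p$. Space Saving with $m$ counters: maintains at most $m$ items with counters and error values; on $(i,c)$, a tracked $i$ has its counter increased by $c$; otherwise if fewer than $m$ items are tracked $i$ is added with counter $c$, error $0$; otherwise an item $j$ with the smallest counter is replaced by $i$ with counter $c(j)+c$ and error $c(j)$. Estimates: tracked $i$: $f_{\max}(i)=c(i)$, $f_{\min}(i)=c(i)-\mathrm{err}(i)$;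 untracked $i$: $f_{\min}(i)=0$, $f_{\max}(i)=$ smallest counter (or $0$ if fewer than $m$ items tracked). Algorithm: one Space Saving instance with $1/\epsilon$ counters per depth; on $(e,c)$ feed $(p,c)$ to the instance of $p$'s depth for every prefix $p$ with $e\preceq p$; $f_{\min}(p),f_{\max}(p)$ are that instance's estimates. Output procedure: set $s_e=0$ for all prefixes; process prefixes in postorder; for prefix $e$, if $f_{\max}(e)-s_e\ge\phi N$ put $e$ in $P$ and add $f_{\min}(e)$ to $s_{\mathrm{par}(e)}$, else add $s_e$ to $s_{\mathrm{par}(e)}$ (no parent update at the root). *)

theory Defs
  imports Complex_Main "HOL-Library.Sublist"
begin

text \<open>Prefixes are represented as lists (paths from the root); the root is the empty
list, the parent of a non-root prefix q is butlast q, the depth of a prefix is its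
length.  For prefixes e and p, "e is below-or-equal p" (p is an ancestor of or equal
to e) is  prefix p e ; strictly below is  strict_prefix p e .\<close>

definition children :: "'b list set \<Rightarrow> 'b list \<Rightarrow> 'b list set" where
  "children T p = {q \<in> T. q \<noteq> [] \<and> butlast q = p}"

definition hierarchy :: "'b list set \<Rightarrow> nat \<Rightarrow> bool" where
  "hierarchy T h \<longleftrightarrow> finite T \<and> [] \<in> T
     \<and> (\<forall>q\<in>T. q \<noteq> [] \<longrightarrow> butlast q \<in> T)
     \<and> (\<forall>p\<in>T. length p \<le> h \<and> (length p < h \<longrightarrow> children T p \<noteq> {}))"

definition freq :: "('b list \<times> nat) list \<Rightarrow> 'b list \<Rightarrow> nat" where
  "freq S e = sum_list (map snd (filter (\<lambda>u. fst u = e) S))"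

definition total :: "('b list \<times> nat) list \<Rightarrow> nat" where
  "total S = sum_list (map snd S)"

definition valid_stream :: "'b list set \<Rightarrow> nat \<Rightarrow> ('b list \<times> nat) list \<Rightarrow> bool" where
  "valid_stream T h S \<longleftrightarrow> (\<forall>(e, c)\<in>set S. e \<in> T \<and> length e = h \<and> c > 0)"

definition cond_count ::
  "'b list set \<Rightarrow> nat \<Rightarrow> ('b list \<times> nat) list \<Rightarrow> 'b list set \<Rightarrow> 'b list \<Rightarrow> nat" where
  "cond_count T h S P p =
     (\<Sum>e\<in>{e\<in>T. length e = h \<and> prefix p e
              \<and> (\<forall>q\<in>P. strict_prefix p q \<longrightarrow> \<not> prefix q e)}. freq S e)"

text \<open>A state maps each tracked item to (counter, error).  Tie-breaking among items
with the smallest counter is left nondeterministic.\<close>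

type_synonym 'k ss_state = "'k \<Rightarrow> (nat \<times> nat) option"

inductive ss_step :: "nat \<Rightarrow> 'k ss_state \<Rightarrow> 'k \<times> nat \<Rightarrow> 'k ss_state \<Rightarrow> bool" where
  tracked: "St i = Some (ci, ei) \<Longrightarrow> ss_step m St (i, c) (St(i \<mapsto> (ci + c, ei)))"
| add: "St i = None \<Longrightarrow> card (dom St) < m \<Longrightarrow> ss_step m St (i, c) (St(i \<mapsto> (c, 0)))"
| replace: "St i = None \<Longrightarrow> \<not> card (dom St) < m \<Longrightarrow> St j = Some (cj, ej)
     \<Longrightarrow> (\<forall>k ck ek. St k = Some (ck, ek) \<longrightarrow> cj \<le> ck)
     \<Longrightarrow> ss_step m St (i, c) ((St(j := None))(i \<mapsto> (cj + c, cj)))"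

inductive ss_run :: "nat \<Rightarrow> ('k \<times> nat) list \<Rightarrow> 'k ss_state \<Rightarrow> bool" where
  Nil: "ss_run m [] Map.empty"
| snoc: "ss_run m xs St \<Longrightarrow> ss_step m St x St' \<Longrightarrow> ss_run m (xs @ [x]) St'"

definition ss_fmax :: "nat \<Rightarrow> 'k ss_state \<Rightarrow> 'k \<Rightarrow> nat" where
  "ss_fmax m St i = (case St i of
      Some (ci, ei) \<Rightarrow> ci
    | None \<Rightarrow> (if card (dom St) < m then 0 else Min {ck. \<exists>k ek. St k = Some (ck, ek)}))"

definition ss_fmin :: "'k ss_state \<Rightarrow> 'k \<Rightarrow> nat" where
  "ss_fmin St i = (case St i of Some (ci, ei) \<Rightarrow> ci - ei | None \<Rightarrow> 0)"

text \<open>Final value of s_p after the postorder pass: s_p is the sum over the children q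
of p of (f_min q if q is output, else s_q); q is output iff f_max q - s_q \<ge> thr.
The first nat argument is the remaining height h - length p (fuel).\<close>

fun hhh_s :: "'b list set \<Rightarrow> ('b list \<Rightarrow> real) \<Rightarrow> ('b list \<Rightarrow> real) \<Rightarrow> real
              \<Rightarrow> nat \<Rightarrow> 'b list \<Rightarrow> real" where
  "hhh_s T fmax fmin thr 0 p = 0"
| "hhh_s T fmax fmin thr (Suc k) p =
     (\<Sum>q\<in>children T p. if fmax q - hhh_s T fmax fmin thr k q \<ge> thr
                        then fmin q else hhh_s T fmax fmin thr k q)"

end

theory Submission
  imports Defs
begin

text \<open>Space Saving with m counters keeps every counter within N/m of the true count, so the
  estimates of each prefix p satisfy f_min(p) \<le> f(p) \<le> f_min(p) + \<epsilon>N and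
  f_max(p) \<le> f(p) + \<epsilon>N.  Let W(p) be the part of f(p) lying below outputs strictly below p,
  so that F_p = f(p) - W(p).  The output procedure computes s_p by the same recursion over the
  children as W(p), with f_min in place of f at outputs; by induction over the tree the
  underestimates W - s of p and of all outputs below p add up to at most \<epsilon>N per output below p.
  Hence F'_p - F_p \<le> \<epsilon>N + (W(p) - s_p) \<le> |P| \<epsilon>N.  On the other hand every output has
  F_p \<ge> \<phi>N - \<epsilon>N - (W(p) - s_p), the conditioned counts of the outputs are supported on
  disjoint sets of leaves, and the underestimates sum to at most |P| \<epsilon>N, so
  |P| (\<phi> - 2\<epsilon>) N \<le> N.\<close>

section \<open>Space Saving\<close>

lemma freq_Nil [simp]: "freq [] k = 0"
  by (simp add: freq_def)

lemma freq_snoc: "freq (xs @ [(i, c)]) k = freq xs k + (if i = k then c else 0)"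
  by (simp add: freq_def)

lemma freq_Cons: "freq ((e, c) # S) k = (if e = k then c else 0) + freq S k"
  by (simp add: freq_def)

lemma total_Nil [simp]: "total [] = 0"
  by (simp add: total_def)

lemma total_snoc: "total (xs @ [(i, c)]) = total xs + c"
  by (simp add: total_def)

definition ss_count :: "'k ss_state \<Rightarrow> 'k \<Rightarrow> nat" where
  "ss_count St k = fst (the (St k))"

definition ss_invariant :: "nat \<Rightarrow> ('b list \<times> nat) list \<Rightarrow> 'b list ss_state \<Rightarrow> bool" where
  "ss_invariant m xs St \<longleftrightarrow> finite (dom St) \<and> card (dom St) \<le> m
    \<and> (\<forall>i ci ei. St i = Some (ci, ei) \<longrightarrow>
         ei \<le> ci \<and> ci - ei \<le> freq xs i \<and> freq xs i \<le> ci \<and> ei * m \<le> total xs)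
    \<and> sum (ss_count St) (dom St) = total xs
    \<and> (\<forall>i. St i = None \<longrightarrow> (card (dom St) < m \<longrightarrow> freq xs i = 0)
           \<and> (\<forall>k ck ek. St k = Some (ck, ek) \<longrightarrow> freq xs i \<le> ck))"

lemma ss_invariant_Nil: "ss_invariant m [] Map.empty"
  by (simp add: ss_invariant_def)

lemma ss_invariant_tracked:
  assumes I: "ss_invariant m xs St" and Si: "St i = Some (ci, ei)"
  shows "ss_invariant m (xs @ [(i, c)]) (St(i \<mapsto> (ci + c, ei)))"
proof -
  let ?St' = "St(i \<mapsto> (ci + c, ei))"
  have dom': "dom ?St' = dom St" and idom: "i \<in> dom St"
    using Si by auto
  have fin: "finite (dom St)"
    using I by (simp add: ss_invariant_def)
  have "sum (ss_count ?St') (dom St) = ss_count ?St' i + sum (ss_count St) (dom St - {i})"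
    using fin idom by (simp add: sum.remove ss_count_def)
  also have "\<dots> = sum (ss_count St) (dom St) + c"
    using fin idom Si by (simp add: sum.remove ss_count_def)
  finally have "sum (ss_count ?St') (dom ?St') = total (xs @ [(i, c)])"
    using I dom' by (simp add: ss_invariant_def total_snoc)
  then show ?thesis
    using I Si dom' unfolding ss_invariant_def
    by (auto simp: freq_snoc total_snoc split: if_splits; fastforce)
qed

lemma ss_invariant_add:
  assumes I: "ss_invariant m xs St" and Si: "St i = None" and room: "card (dom St) < m"
  shows "ss_invariant m (xs @ [(i, c)]) (St(i \<mapsto> (c, 0)))"
proof -
  let ?St' = "St(i \<mapsto> (c, 0))"
  have dom': "dom ?St' = insert i (dom St)" and idom: "i \<notin> dom St"
    using Si by auto
  have fin: "finite (dom St)"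
    using I by (simp add: ss_invariant_def)
  have "sum (ss_count ?St') (dom ?St') = c + sum (ss_count ?St') (dom St)"
    using fin idom dom' by (simp add: ss_count_def)
  also have "\<dots> = c + sum (ss_count St) (dom St)"
    using idom by (intro arg_cong2[where f = "(+)"] sum.cong) (auto simp: ss_count_def)
  also have "\<dots> = total (xs @ [(i, c)])"
    using I by (simp add: ss_invariant_def total_snoc)
  finally have sum': "sum (ss_count ?St') (dom ?St') = total (xs @ [(i, c)])" .
  have "card (dom ?St') = Suc (card (dom St))"
    using dom' idom fin by simp
  moreover have "\<And>k ck ek. St k = Some (ck, ek) \<Longrightarrow> ek * m \<le> total xs + c"
    using I by (simp add: ss_invariant_def) (meson trans_le_add1)
  moreover have "\<And>k. St k = None \<Longrightarrow> freq xs k = 0"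
    using I room by (simp add: ss_invariant_def)
  ultimately show ?thesis
    using I Si sum' room fin dom' unfolding ss_invariant_def
    by (auto simp: freq_snoc total_snoc split: if_splits)
qed

lemma ss_invariant_lower_bound_counters:
  assumes I: "ss_invariant m xs St" and full: "\<not> card (dom St) < m"
    and b: "\<And>k. k \<in> dom St \<Longrightarrow> b \<le> ss_count St k"
  shows "b * m \<le> total xs"
proof -
  have "b * m = (\<Sum>k\<in>dom St. b)"
    using I full by (simp add: ss_invariant_def)
  also have "\<dots> \<le> sum (ss_count St) (dom St)"
    by (rule sum_mono) (rule b)
  also have "\<dots> = total xs"
    using I by (simp add: ss_invariant_def)
  finally show ?thesis .
qed

lemma ss_invariant_replace:
  assumes I: "ss_invariant m xs St" and Si: "St i = None" and full: "\<not> card (dom St) < m"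
    and Sj: "St j = Some (cj, ej)" and min: "\<forall>k ck ek. St k = Some (ck, ek) \<longrightarrow> cj \<le> ck"
  shows "ss_invariant m (xs @ [(i, c)]) ((St(j := None))(i \<mapsto> (cj + c, cj)))"
proof -
  let ?St' = "(St(j := None))(i \<mapsto> (cj + c, cj))"
  let ?xs = "xs @ [(i, c)]"
  have dom': "dom ?St' = insert i (dom St - {j})" and idom: "i \<notin> dom St" and jdom: "j \<in> dom St"
    using Si Sj by auto
  have fin: "finite (dom St)" and card_eq: "card (dom St) = m"
    using I full by (auto simp: ss_invariant_def)
  have "m > 0"
    using fin jdom card_eq card_gt_0_iff by blast
  then have card': "card (dom ?St') = m"
    using dom' idom fin jdom card_eq by (simp add: card_Suc_Diff1)
  have "sum (ss_count ?St') (dom ?St') = cj + c + sum (ss_count ?St') (dom St - {j})"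
    using fin idom dom' by (simp add: ss_count_def)
  also have "\<dots> = cj + c + sum (ss_count St) (dom St - {j})"
    using idom by (intro arg_cong2[where f = "(+)"] sum.cong) (auto simp: ss_count_def)
  also have "\<dots> = total ?xs"
    using I fin jdom Sj by (simp add: ss_invariant_def sum.remove ss_count_def total_snoc)
  finally have sum': "sum (ss_count ?St') (dom ?St') = total ?xs" .
  have cj_m: "cj * m \<le> total xs"
    by (rule ss_invariant_lower_bound_counters[OF I full]) (use min in \<open>force simp: ss_count_def\<close>)
  have freq_untracked: "\<And>k. St k = None \<or> k = j \<Longrightarrow> freq xs k \<le> cj"
    using I Sj unfolding ss_invariant_def by blast
  have tracked': "ek \<le> ck \<and> ck - ek \<le> freq ?xs k \<and> freq ?xs k \<le> ck \<and> ek * m \<le> total ?xs"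
    if "?St' k = Some (ck, ek)" for k ck ek
  proof (cases "k = i")
    case True
    then show ?thesis
      using that freq_untracked[of i] Si cj_m by (auto simp: freq_snoc total_snoc)
  next
    case False
    then have "St k = Some (ck, ek)"
      using that by (auto split: if_splits)
    then show ?thesis
      using I False unfolding ss_invariant_def by (fastforce simp: freq_snoc total_snoc)
  qed
  have untracked': "freq ?xs k \<le> ck" if "?St' k = None" "?St' k' = Some (ck, ek)" for k k' ck ek
  proof -
    have "freq xs k \<le> cj"
      using that(1) freq_untracked by (auto split: if_splits)
    moreover have "cj \<le> ck"
      using that(2) min by (auto split: if_splits)
    ultimately show ?thesis
      using that(1) by (auto simp: freq_snoc split: if_splits)
  qed
  show ?thesis
    unfolding ss_invariant_def using fin dom' card' tracked' untracked' sum' by auto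
qed

lemma ss_run_invariant: "ss_run m xs St \<Longrightarrow> ss_invariant m xs St"
proof (induction rule: ss_run.induct)
  case Nil
  show ?case by (rule ss_invariant_Nil)
next
  case (snoc m xs St x St')
  obtain i c where x: "x = (i, c)"
    by (cases x)
  from snoc.hyps(2) have "ss_step m St (i, c) St'"
    by (simp add: x)
  then show ?case
  proof (cases rule: ss_step.cases)
    case (tracked ci ei)
    show ?thesis
      unfolding x tracked(1) by (rule ss_invariant_tracked[OF snoc.IH tracked(2)])
  next
    case add
    show ?thesis
      unfolding x add(1) by (rule ss_invariant_add[OF snoc.IH add(2,3)])
  next
    case (replace j cj ej)
    show ?thesis
      unfolding x replace(1) by (rule ss_invariant_replace[OF snoc.IH replace(2-5)])
  qed
qed

lemma of_nat_le_divide_of_mult_le: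
  assumes "a * m \<le> t" and "m > 0"
  shows "real a \<le> real t / real m"
  using assms by (simp add: pos_le_divide_eq flip: of_nat_mult)

lemma ss_fmin_le_freq:
  assumes "ss_run m xs St"
  shows "ss_fmin St i \<le> freq xs i"
  using ss_run_invariant[OF assms]
  by (cases "St i") (auto simp: ss_fmin_def ss_invariant_def)

lemma freq_le_ss_fmin:
  assumes R: "ss_run m xs St" and m: "m > 0"
  shows "real (freq xs i) \<le> real (ss_fmin St i) + real (total xs) / real m"
proof -
  have I: "ss_invariant m xs St"
    using R by (rule ss_run_invariant)
  show ?thesis
  proof (cases "St i")
    case None
    have "freq xs i * m \<le> total xs"
    proof (cases "card (dom St) < m")
      case True
      then show ?thesis
        using I None by (simp add: ss_invariant_def)
    next
      case False
      show ?thesis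
        by (rule ss_invariant_lower_bound_counters[OF I False])
          (use I None in \<open>force simp: ss_invariant_def ss_count_def\<close>)
    qed
    then show ?thesis
      using None m of_nat_le_divide_of_mult_le by (simp add: ss_fmin_def)
  next
    case (Some a)
    then obtain ci ei where Si: "St i = Some (ci, ei)"
      by (cases a) auto
    then have "ei \<le> ci" "freq xs i \<le> ci" "ei * m \<le> total xs"
      using I unfolding ss_invariant_def by blast+
    then show ?thesis
      using Si m of_nat_le_divide_of_mult_le[of ei m "total xs"] by (simp add: ss_fmin_def of_nat_diff)
  qed
qed

lemma ss_fmax_le:
  assumes R: "ss_run m xs St" and m: "m > 0"
  shows "real (ss_fmax m St i) \<le> real (freq xs i) + real (total xs) / real m"
proof -
  have I: "ss_invariant m xs St"
    using R by (rule ss_run_invariant)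
  show ?thesis
  proof (cases "St i")
    case None
    show ?thesis
    proof (cases "card (dom St) < m")
      case True
      then show ?thesis
        using None by (simp add: ss_fmax_def)
    next
      case False
      have counters: "{ck. \<exists>k ek. St k = Some (ck, ek)} = ss_count St ` dom St"
        by (force simp: ss_count_def)
      have fin: "finite (dom St)"
        using I by (simp add: ss_invariant_def)
      have "Min (ss_count St ` dom St) * m \<le> total xs"
        by (rule ss_invariant_lower_bound_counters[OF I False]) (simp add: fin)
      then show ?thesis
        using None False m counters of_nat_le_divide_of_mult_le by (fastforce simp: ss_fmax_def)
    qed
  next
    case (Some a)
    then obtain ci ei where Si: "St i = Some (ci, ei)"
      by (cases a) auto
    then have "ci \<le> freq xs i + ei" "ei * m \<le> total xs"
      using I unfolding ss_invariant_def by fastforce+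
    then show ?thesis
      using Si m of_nat_le_divide_of_mult_le[of ei m "total xs"] by (simp add: ss_fmax_def)
  qed
qed

section \<open>Hierarchies\<close>

lemma hierarchy_prefix_closed:
  assumes H: "hierarchy T h" and "r \<in> T" and "prefix q r"
  shows "q \<in> T"
  using assms(2,3)
proof (induction r arbitrary: q rule: rev_induct)
  case Nil
  then show ?case
    using H by (simp add: hierarchy_def)
next
  case (snoc x xs)
  have "xs \<in> T"
    using H snoc.prems(1) unfolding hierarchy_def by (metis butlast_snoc snoc_eq_iff_butlast)
  then show ?case
    using snoc by auto
qed

lemma hierarchy_length_le: "hierarchy T h \<Longrightarrow> p \<in> T \<Longrightarrow> length p \<le> h"
  by (simp add: hierarchy_def)

lemma prefix_iff_take: "prefix p e \<longleftrightarrow> take (length p) e = p"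
  by (metis append_eq_conv_conj prefix_def take_is_prefix)

lemma children_strict_prefix:
  assumes "q \<in> children T p"
  shows "strict_prefix p q" and "length q = Suc (length p)" and "q \<in> T"
proof -
  have q: "q \<in> T" "q \<noteq> []" "butlast q = p"
    using assms by (auto simp: children_def)
  then have "q = p @ [last q]"
    by (metis append_butlast_last_id)
  then show "strict_prefix p q" "length q = Suc (length p)" "q \<in> T"
    using q by (metis length_append_singleton strict_prefixI')+
qed

lemma take_Suc_in_children:
  assumes H: "hierarchy T h" and "r \<in> T" and "strict_prefix p r"
  shows "take (Suc (length p)) r \<in> children T p"
proof -
  have "length p < length r"
    using assms(3) by (rule prefix_length_less)
  moreover have "take (length p) r = p"
    using assms(3) prefix_iff_take by (blast dest: prefix_order.less_imp_le)
  moreover have "take (Suc (length p)) r \<in> T"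
    using hierarchy_prefix_closed[OF H assms(2) take_is_prefix] .
  ultimately show ?thesis
    by (auto simp: children_def butlast_take)
qed

lemma children_prefix_unique:
  assumes "q1 \<in> children T p" "q2 \<in> children T p" "prefix q1 r" "prefix q2 r"
  shows "q1 = q2"
  using assms children_strict_prefix(2) prefix_length_prefix prefix_order.antisym
  by (metis order_refl)

lemma finite_children: "hierarchy T h \<Longrightarrow> finite (children T p)"
  by (rule finite_subset[of _ T]) (auto simp: children_def hierarchy_def)

lemma sum_strict_descendants_children:
  assumes H: "hierarchy T h" and A: "A \<subseteq> T"
  shows "(\<Sum>r\<in>{r\<in>A. strict_prefix p r}. g r) = (\<Sum>q\<in>children T p. \<Sum>r\<in>{r\<in>A. prefix q r}. g r)"
proof -
  have "{r\<in>A. strict_prefix p r} = (\<Union>q\<in>children T p. {r\<in>A. prefix q r})"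
  proof (intro equalityI subsetI)
    fix r
    assume "r \<in> {r\<in>A. strict_prefix p r}"
    then show "r \<in> (\<Union>q\<in>children T p. {r\<in>A. prefix q r})"
      using take_Suc_in_children[OF H, of r p] A take_is_prefix by blast
  qed (auto dest: children_strict_prefix(1) intro: prefix_order.less_le_trans)
  moreover have "finite A"
    using A H finite_subset unfolding hierarchy_def by blast
  ultimately show ?thesis
    using finite_children[OF H]
    by (auto intro!: sum.UNION_disjoint dest: children_prefix_unique)
qed

lemma sum_descendants_split:
  assumes "finite P"
  shows "(\<Sum>r\<in>{r\<in>P. prefix q r}. g r)
    = (if q \<in> P then g q else 0) + (\<Sum>r\<in>{r\<in>P. strict_prefix q r}. g r)"
proof -
  have "{r\<in>P. prefix q r} = (if q \<in> P then insert q else id) {r\<in>P. strict_prefix q r}"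
    by (auto simp: prefix_order.le_less)
  then show ?thesis
    using assms by simp
qed

section \<open>Counts of prefixes\<close>

definition leaves_below :: "'b list set \<Rightarrow> nat \<Rightarrow> 'b list \<Rightarrow> 'b list set" where
  "leaves_below T h p = {e \<in> T. length e = h \<and> prefix p e}"

definition prefix_freq :: "'b list set \<Rightarrow> nat \<Rightarrow> ('b list \<times> nat) list \<Rightarrow> 'b list \<Rightarrow> nat" where
  "prefix_freq T h S p = (\<Sum>e\<in>leaves_below T h p. freq S e)"

definition covered_leaves :: "'b list set \<Rightarrow> nat \<Rightarrow> 'b list set \<Rightarrow> 'b list \<Rightarrow> 'b list set" where
  "covered_leaves T h P p = {e \<in> leaves_below T h p. \<exists>q\<in>P. strict_prefix p q \<and> prefix q e}"

definition covered_freq ::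
  "'b list set \<Rightarrow> nat \<Rightarrow> ('b list \<times> nat) list \<Rightarrow> 'b list set \<Rightarrow> 'b list \<Rightarrow> nat" where
  "covered_freq T h S P p = (\<Sum>e\<in>covered_leaves T h P p. freq S e)"

lemma prefix_freq_eq_covered_freq_plus_cond_count:
  assumes "finite T"
  shows "prefix_freq T h S p = covered_freq T h S P p + cond_count T h S P p"
proof -
  let ?C = "{e\<in>T. length e = h \<and> prefix p e \<and> (\<forall>q\<in>P. strict_prefix p q \<longrightarrow> \<not> prefix q e)}"
  have "leaves_below T h p = covered_leaves T h P p \<union> ?C" and "covered_leaves T h P p \<inter> ?C = {}"
    by (auto simp: leaves_below_def covered_leaves_def)
  moreover have "finite (covered_leaves T h P p)" and "finite ?C"
    using assms by (auto simp: covered_leaves_def leaves_below_def)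
  ultimately show ?thesis
    unfolding prefix_freq_def covered_freq_def cond_count_def by (simp add: sum.union_disjoint)
qed

lemma freq_project:
  assumes "valid_stream T h S" and "finite T"
  shows "freq (map (\<lambda>(e, c). (take (length p) e, c)) S) p = prefix_freq T h S p"
  using assms(1)
proof (induction S)
  case Nil
  then show ?case
    by (simp add: prefix_freq_def)
next
  case (Cons x S)
  obtain e c where x: "x = (e, c)"
    by (cases x)
  have e: "e \<in> T" "length e = h" and S: "valid_stream T h S"
    using Cons.prems by (auto simp: x valid_stream_def)
  have "(\<Sum>e'\<in>leaves_below T h p. if e = e' then c else 0) = (if take (length p) e = p then c else 0)"
    using assms(2) e by (simp add: leaves_below_def prefix_iff_take)
  then show ?case
    using Cons.IH[OF S] by (simp add: x freq_Cons prefix_freq_def sum.distrib)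
qed

lemma total_project: "total (map (\<lambda>(e, c). (take d e, c)) S) = total S"
  by (induction S) (auto simp: total_def)

lemma prefix_freq_Nil:
  assumes "valid_stream T h S" and "finite T"
  shows "prefix_freq T h S [] = total S"
proof -
  have "freq (map (\<lambda>(e, c). (take 0 e, c)) S) [] = total S"
    by (induction S) (auto simp: freq_def total_def)
  then show ?thesis
    using freq_project[OF assms, of "[]"] by simp
qed

lemma ss_prefix_estimates:
  assumes stream: "valid_stream T h S" and fin: "finite T" and m: "m > 0"
    and run: "ss_run m (map (\<lambda>(e, c). (take (length p) e, c)) S) St"
  shows "real (ss_fmax m St p) \<le> real (prefix_freq T h S p) + real (total S) / real m"
    and "ss_fmin St p \<le> prefix_freq T h S p"
    and "real (prefix_freq T h S p) \<le> real (ss_fmin St p) + real (total S) / real m"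
  using ss_fmax_le[OF run m, where i = p] ss_fmin_le_freq[OF run, where i = p]
    freq_le_ss_fmin[OF run m, where i = p]
  by (simp_all add: freq_project[OF stream fin] total_project)

lemma covered_freq_children:
  assumes H: "hierarchy T h"
  shows "covered_freq T h S P p
    = (\<Sum>q\<in>children T p. if q \<in> P then prefix_freq T h S q else covered_freq T h S P q)"
proof -
  let ?A = "covered_leaves T h P p"
  have children_part:
    "{e\<in>?A. prefix q e} = (if q \<in> P then leaves_below T h q else covered_leaves T h P q)"
    if q: "q \<in> children T p" for q
  proof -
    have pq: "strict_prefix p q" and len: "length q = Suc (length p)"
      using children_strict_prefix[OF q] by blast+
    have covered_below_q: "(\<exists>r\<in>P. strict_prefix p r \<and> prefix r e)
        \<longleftrightarrow> q \<in> P \<or> (\<exists>r\<in>P. strict_prefix q r \<and> prefix r e)"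
      if "prefix q e" for e
    proof
      assume "\<exists>r\<in>P. strict_prefix p r \<and> prefix r e"
      then obtain r where r: "r \<in> P" "strict_prefix p r" "prefix r e"
        by blast
      have "prefix q r"
        using prefix_length_prefix[OF that r(3)] prefix_length_less[OF r(2)] len by simp
      then show "q \<in> P \<or> (\<exists>r\<in>P. strict_prefix q r \<and> prefix r e)"
        using r by (metis prefix_order.le_less)
    qed (use pq that in \<open>auto intro: prefix_order.less_trans prefix_order.less_le_trans\<close>)
    have "prefix p e" if "prefix q e" for e
      using pq that by (auto dest: prefix_order.less_imp_le)
    then show ?thesis
      using covered_below_q by (auto simp: covered_leaves_def leaves_below_def) blast+
  qed
  have "?A \<subseteq> T"
    by (auto simp: covered_leaves_def leaves_below_def)
  moreover have "{e\<in>?A. strict_prefix p e} = ?A"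
    by (auto simp: covered_leaves_def intro: prefix_order.less_le_trans)
  ultimately have "covered_freq T h S P p = (\<Sum>q\<in>children T p. \<Sum>e\<in>{e\<in>?A. prefix q e}. freq S e)"
    using sum_strict_descendants_children[OF H, where A = ?A and p = p and g = "freq S"]
    by (simp add: covered_freq_def)
  also have "\<dots> = (\<Sum>q\<in>children T p. if q \<in> P then prefix_freq T h S q else covered_freq T h S P q)"
    by (rule sum.cong[OF refl]) (simp add: children_part prefix_freq_def covered_freq_def)
  finally show ?thesis .
qed

section \<open>The output procedure\<close>

lemma hhh_s_children:
  assumes H: "hierarchy T h" and p: "p \<in> T"
  shows "hhh_s T fmax fmin thr (h - length p) p
    = (\<Sum>q\<in>children T p. if thr \<le> fmax q - hhh_s T fmax fmin thr (h - length q) q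
                          then fmin q else hhh_s T fmax fmin thr (h - length q) q)"
proof (cases "length p < h")
  case True
  define k where "k = h - Suc (length p)"
  have "h - length p = Suc k"
    using True by (simp add: k_def)
  then have "hhh_s T fmax fmin thr (h - length p) p
      = (\<Sum>q\<in>children T p. if thr \<le> fmax q - hhh_s T fmax fmin thr k q
                            then fmin q else hhh_s T fmax fmin thr k q)"
    by (simp only: hhh_s.simps(2))
  also have "\<dots> = (\<Sum>q\<in>children T p. if thr \<le> fmax q - hhh_s T fmax fmin thr (h - length q) q
                                    then fmin q else hhh_s T fmax fmin thr (h - length q) q)"
    by (rule sum.cong[OF refl]) (simp add: k_def children_strict_prefix(2))
  finally show ?thesis .
next
  case False
  have "q \<notin> children T p" for q
  proof
    assume q: "q \<in> children T p"
    have "length q \<le> h"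
      using hierarchy_length_le[OF H children_strict_prefix(3)[OF q]] .
    then show False
      using False children_strict_prefix(2)[OF q] by simp
  qed
  then have "children T p = {}"
    by blast
  then show ?thesis
    using False by simp
qed

lemma hhh_s_output_children:
  assumes H: "hierarchy T h" and p: "p \<in> T"
    and s: "\<And>q. s q = hhh_s T fmax fmin thr (h - length q) q"
  shows "s p = (\<Sum>q\<in>children T p. if q \<in> {q\<in>T. thr \<le> fmax q - s q} then fmin q else s q)"
  unfolding s hhh_s_children[OF H p]
  by (rule sum.cong[OF refl]) (simp add: children_strict_prefix(3)[of _ T p])

lemma sum_cond_count_le_prefix_freq_Nil:
  assumes "finite T" and "finite P"
  shows "(\<Sum>p\<in>P. cond_count T h S P p) \<le> prefix_freq T h S []"
proof -
  define C where
    "C p = {e\<in>T. length e = h \<and> prefix p e \<and> (\<forall>q\<in>P. strict_prefix p q \<longrightarrow> \<not> prefix q e)}" for p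
  have disjoint: "C p1 \<inter> C p2 = {}" if "p1 \<in> P" "p2 \<in> P" "p1 \<noteq> p2" for p1 p2
  proof (rule ccontr)
    assume "C p1 \<inter> C p2 \<noteq> {}"
    then obtain e where e1: "e \<in> C p1" and e2: "e \<in> C p2"
      by blast
    then have "prefix p1 p2 \<or> prefix p2 p1"
      by (intro prefix_same_cases) (auto simp: C_def)
    then have "strict_prefix p1 p2 \<or> strict_prefix p2 p1"
      using \<open>p1 \<noteq> p2\<close> by (auto intro: strict_prefixI)
    then show False
      using e1 e2 that(1,2) by (auto simp: C_def)
  qed
  have "(\<Sum>p\<in>P. cond_count T h S P p) = (\<Sum>p\<in>P. \<Sum>e\<in>C p. freq S e)"
    by (simp add: cond_count_def C_def)
  also have "\<dots> = (\<Sum>e\<in>(\<Union>p\<in>P. C p). freq S e)"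
    using assms disjoint by (intro sum.UNION_disjoint[symmetric]) (auto simp: C_def)
  also have "\<dots> \<le> prefix_freq T h S []"
    unfolding prefix_freq_def using assms(1) by (intro sum_mono2) (auto simp: C_def leaves_below_def)
  finally show ?thesis .
qed

text \<open>f p stands for the count f(p) and W p for the part of it below outputs strictly below p,
  so that f p - W p is the conditioned count F_p; s is the output procedure's estimate of W and
  fmax p - s p the estimated conditioned count F'_p.\<close>

locale hhh_output =
  fixes T :: "'b list set" and h :: nat and P :: "'b list set"
    and fmax fmin s f W :: "'b list \<Rightarrow> real" and E :: real
  assumes hierarchy: "hierarchy T h"
    and output_subset: "P \<subseteq> T"
    and s_children: "\<And>p. p \<in> T \<Longrightarrow> s p = (\<Sum>q\<in>children T p. if q \<in> P then fmin q else s q)"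
    and W_children: "\<And>p. p \<in> T \<Longrightarrow> W p = (\<Sum>q\<in>children T p. if q \<in> P then f q else W q)"
    and fmax_le: "\<And>p. p \<in> T \<Longrightarrow> fmax p \<le> f p + E"
    and fmin_le: "\<And>p. p \<in> T \<Longrightarrow> fmin p \<le> f p"
    and le_fmin: "\<And>p. p \<in> T \<Longrightarrow> f p \<le> fmin p + E"
begin

lemma finite_output: "finite P"
  using hierarchy output_subset finite_subset unfolding hierarchy_def by blast

lemma root_in_hierarchy: "[] \<in> T"
  using hierarchy by (simp add: hierarchy_def)

lemma error_nonneg: "0 \<le> E"
  using fmin_le[OF root_in_hierarchy] le_fmin[OF root_in_hierarchy] by linarith

text \<open>W p - s p is the sum of f r - fmin r \<in> [0, E] over the outputs r below p with no output
  in between, so on the left of the bound each output r is charged once, by its nearest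
  output ancestor or by p.\<close>

lemma covered_error_bound:
  assumes "p \<in> T"
  shows "0 \<le> W p - s p
    \<and> (W p - s p) + (\<Sum>r\<in>{r\<in>P. strict_prefix p r}. W r - s r) \<le> E * card {r\<in>P. strict_prefix p r}"
  using assms
proof (induction p rule: measure_induct_rule[where f = "\<lambda>p. h - length p"])
  case (less p)
  define X where "X r = W r - s r" for r
  define D where "D q = {r\<in>P. strict_prefix q r}" for q
  have child: "q \<in> T" "0 \<le> X q" "X q + (\<Sum>r\<in>D q. X r) \<le> E * card (D q)"
    "0 \<le> f q - fmin q" "f q - fmin q \<le> E"
    if "q \<in> children T p" for q
  proof -
    show "q \<in> T"
      using children_strict_prefix(3)[OF that] .
    moreover have "h - length q < h - length p"
      using children_strict_prefix(2)[OF that] hierarchy_length_le[OF hierarchy \<open>q \<in> T\<close>] by simp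
    ultimately show "0 \<le> X q" "X q + (\<Sum>r\<in>D q. X r) \<le> E * card (D q)"
      using less.IH unfolding X_def D_def by blast+
    show "0 \<le> f q - fmin q" "f q - fmin q \<le> E"
      using fmin_le le_fmin \<open>q \<in> T\<close> by force+
  qed
  have X_p: "X p = (\<Sum>q\<in>children T p. if q \<in> P then f q - fmin q else X q)"
    using s_children[OF less.prems] W_children[OF less.prems]
    by (simp add: X_def sum_subtractf[symmetric] if_distrib cong: if_cong)
  have split: "(\<Sum>r\<in>D p. g r) = (\<Sum>q\<in>children T p. (if q \<in> P then g q else 0) + (\<Sum>r\<in>D q. g r))"
    for g :: "'b list \<Rightarrow> real"
    unfolding D_def
    by (subst sum_strict_descendants_children[OF hierarchy output_subset])
      (simp add: sum_descendants_split[OF finite_output])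
  have "X p + (\<Sum>r\<in>D p. X r)
      = (\<Sum>q\<in>children T p. (if q \<in> P then f q - fmin q + X q else X q) + (\<Sum>r\<in>D q. X r))"
    unfolding X_p split sum.distrib[symmetric] by (intro sum.cong) auto
  also have "\<dots> \<le> (\<Sum>q\<in>children T p. E * ((if q \<in> P then 1 else 0) + real (card (D q))))"
  proof (rule sum_mono)
    fix q
    assume "q \<in> children T p"
    from child[OF this] show "(if q \<in> P then f q - fmin q + X q else X q) + (\<Sum>r\<in>D q. X r)
        \<le> E * ((if q \<in> P then 1 else 0) + real (card (D q)))"
      by (auto simp: algebra_simps)
  qed
  also have "\<dots> = E * card (D p)"
    using split[of "\<lambda>_. 1"] by (simp add: sum_distrib_left)
  finally show ?case
    using child X_p by (auto simp: X_def D_def intro: sum_nonneg)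
qed

lemma conditioned_error_le:
  assumes "p \<in> P"
  shows "(fmax p - s p) - (f p - W p) \<le> E * card P"
proof -
  let ?D = "{r\<in>P. strict_prefix p r}"
  have p: "p \<in> T"
    using assms output_subset by blast
  have "card ?D < card P"
    using assms finite_output by (intro psubset_card_mono) auto
  then have "real (card ?D) + 1 \<le> real (card P)"
    by linarith
  then have "E * card ?D + E \<le> E * card P"
    using mult_left_mono[OF _ error_nonneg] by (fastforce simp: distrib_left)
  moreover have "0 \<le> (\<Sum>r\<in>?D. W r - s r)"
    using covered_error_bound output_subset by (intro sum_nonneg) blast
  ultimately show ?thesis
    using covered_error_bound[OF p] fmax_le[OF p] by linarith
qed

lemma card_output_le:
  assumes conditioned_sum: "(\<Sum>p\<in>P. f p - W p) \<le> N"
    and threshold: "\<And>p. p \<in> P \<Longrightarrow> thr \<le> fmax p - s p"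
  shows "card P * (thr - 2 * E) \<le> N"
proof -
  have "(\<Sum>p\<in>P. W p - s p)
      = (if [] \<in> P then W [] - s [] else 0) + (\<Sum>r\<in>{r\<in>P. strict_prefix [] r}. W r - s r)"
    using sum_descendants_split[OF finite_output, where q = "[]" and g = "\<lambda>r. W r - s r"] by simp
  also have "\<dots> \<le> E * card {r\<in>P. strict_prefix [] r}"
    using covered_error_bound[OF root_in_hierarchy] by auto
  also have "\<dots> \<le> E * card P"
    using error_nonneg finite_output by (intro mult_left_mono) (simp_all add: card_mono)
  finally have covered_sum: "(\<Sum>p\<in>P. W p - s p) \<le> E * card P" .
  have "card P * (thr - E) - (\<Sum>p\<in>P. W p - s p) = (\<Sum>p\<in>P. thr - E - (W p - s p))"
    by (simp add: sum_subtractf)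
  also have "\<dots> \<le> (\<Sum>p\<in>P. f p - W p)"
    using threshold fmax_le output_subset by (intro sum_mono) fastforce
  finally show ?thesis
    using conditioned_sum covered_sum by (simp add: algebra_simps)
qed

end

theorem theorem3:
  fixes T :: "'b list set" and h :: nat and S :: "('b list \<times> nat) list"
    and m :: nat and \<epsilon> \<phi> :: real
    and SS :: "nat \<Rightarrow> 'b list ss_state"
    and fmax fmin s :: "'b list \<Rightarrow> real" and P :: "'b list set"
  assumes hier: "hierarchy T h"
    and stream: "valid_stream T h S"
    and N_pos: "total S > 0"
    and m_pos: "m > 0" and eps: "\<epsilon> = 1 / real m"
    and eps_phi: "\<epsilon> < \<phi> / 2"
    and runs: "\<forall>d\<le>h. ss_run m (map (\<lambda>(e, c). (take d e, c)) S) (SS d)"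
    and fmax_def: "\<forall>p. fmax p = real (ss_fmax m (SS (length p)) p)"
    and fmin_def: "\<forall>p. fmin p = real (ss_fmin (SS (length p)) p)"
    and s_def: "\<forall>p. s p = hhh_s T fmax fmin (\<phi> * real (total S)) (h - length p) p"
    and P_def: "P = {p \<in> T. fmax p - s p \<ge> \<phi> * real (total S)}"
  shows "real (card P) \<le> 1 / (\<phi> - 2 * \<epsilon>)
    \<and> (\<forall>p\<in>P. (fmax p - s p) - real (cond_count T h S P p)
                \<le> 1 / (\<phi> - 2 * \<epsilon>) * (\<epsilon> * real (total S)))"
proof -
  let ?N = "real (total S)"
  have fin: "finite T"
    using hier by (simp add: hierarchy_def)
  have run: "ss_run m (map (\<lambda>(e, c). (take (length p) e, c)) S) (SS (length p))" if "p \<in> T" for p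
    using runs hierarchy_length_le[OF hier that] by blast
  interpret hhh_output T h P fmax fmin s "\<lambda>p. real (prefix_freq T h S p)"
    "\<lambda>p. real (covered_freq T h S P p)" "\<epsilon> * ?N"
  proof
    fix p
    assume p: "p \<in> T"
    note estimates = ss_prefix_estimates[OF stream fin m_pos run[OF p]]
    show "s p = (\<Sum>q\<in>children T p. if q \<in> P then fmin q else s q)"
      unfolding P_def by (rule hhh_s_output_children[OF hier p s_def[rule_format]])
    show "real (covered_freq T h S P p)
        = (\<Sum>q\<in>children T p. if q \<in> P then real (prefix_freq T h S q) else real (covered_freq T h S P q))"
      by (simp add: covered_freq_children[OF hier] of_nat_sum if_distrib)
    show "fmax p \<le> real (prefix_freq T h S p) + \<epsilon> * ?N"
      "fmin p \<le> real (prefix_freq T h S p)" "real (prefix_freq T h S p) \<le> fmin p + \<epsilon> * ?N"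
      using estimates fmax_def fmin_def by (simp_all add: eps)
  qed (use hier P_def in auto)
  have cond_count:
    "real (cond_count T h S P p) = real (prefix_freq T h S p) - real (covered_freq T h S P p)" for p
    using prefix_freq_eq_covered_freq_plus_cond_count[OF fin, of h S p P] by simp
  have "(\<Sum>p\<in>P. real (cond_count T h S P p)) \<le> ?N"
    using sum_cond_count_le_prefix_freq_Nil[OF fin finite_output, of h S] prefix_freq_Nil[OF stream fin]
    by (simp flip: of_nat_sum)
  then have "card P * (\<phi> * ?N - 2 * (\<epsilon> * ?N)) \<le> ?N"
    unfolding cond_count by (rule card_output_le) (simp add: P_def)
  then have "(card P * (\<phi> - 2 * \<epsilon>)) * ?N \<le> 1 * ?N"
    by (simp add: algebra_simps)
  then have "card P * (\<phi> - 2 * \<epsilon>) \<le> 1"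
    using N_pos by (simp only: mult_le_cancel_right)
  then have card: "real (card P) \<le> 1 / (\<phi> - 2 * \<epsilon>)"
    using eps_phi by (simp add: pos_le_divide_eq)
  moreover have "(fmax p - s p) - real (cond_count T h S P p) \<le> 1 / (\<phi> - 2 * \<epsilon>) * (\<epsilon> * ?N)"
    if "p \<in> P" for p
    using conditioned_error_le[OF that] mult_left_mono[OF card error_nonneg]
    by (simp add: cond_count algebra_simps)
  ultimately show ?thesis
    by blast
qed

end
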